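(* Let $\Sigma\in\mathbb{R}^{p\times p}$ with $\Sigma\succ0$, $\theta_0\in\mathbb{R}^p$, $S=\mathrm{supp}(\theta_0)$, $\xi>0$, and let $\widehat\theta^\infty$ be the unique minimizer of $\theta\mapsto\frac12\langle\theta-\theta_0,\Sigma(\theta-\theta_0)\rangle+\xi\|\theta\|_1$. Let $T\supseteq S$ and $v\in\{+1,0,-1\}^p$ with $\mathrm{supp}(v)=T$. Then $\mathrm{sign}(\widehat\theta^\infty)=v$ if and only if $$\|\Sigma_{T^c,T}\Sigma_{T,T}^{-1}v_T\|_\infty\le1\quad\text{and}\quad v_T=\mathrm{sign}\big(\theta_{0,T}-\xi\Sigma_{T,T}^{-1}v_T\big).$$ Further, if these hold, $\widehat\theta^\infty_{T^c}=0$ and $\widehat\theta^\infty_T=\theta_{0,T}-\xi\Sigma_{T,T}^{-1}v_T$.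
   Context: $\mathrm{sign}(u)_i=+1,0,-1$ according as $u_i>0,=0,<0$; $A_{I,J}$ submatrix with rows in $I$, columns in $J$; $A_{T,T}^{-1}=(A_{T,T})^{-1}$; $v_T$ restriction to $T$; $T^c=[p]\setminus T$. *)

theory Defs
  imports "HOL-Analysis.Analysis"
begin

text \<open>Indices [p] are modelled by a finite type 'n; vectors in R^p as real^'n,
  p x p matrices as real^'n^'n.\<close>

definition pos_def_mat :: "real^'n^'n \<Rightarrow> bool" where
  "pos_def_mat A \<longleftrightarrow> transpose A = A \<and> (\<forall>x. x \<noteq> 0 \<longrightarrow> x \<bullet> (A *v x) > 0)"

definition supp_vec :: "real^'n \<Rightarrow> 'n set" where
  "supp_vec x = {i. x $ i \<noteq> 0}"

definition sign_vec :: "real^'n \<Rightarrow> real^'n" where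
  "sign_vec x = (\<chi> i. sgn (x $ i))"

text \<open>Inverse of the square submatrix M_{T,T} (indexed by T), extended by 0 outside T x T.\<close>
definition sub_inv :: "real^'n^'n \<Rightarrow> 'n set \<Rightarrow> ('n \<Rightarrow> 'n \<Rightarrow> real)" where
  "sub_inv M T = (THE N. (\<forall>i\<in>T. \<forall>j\<in>T. (\<Sum>k\<in>T. M $ i $ k * N k j) = (if i = j then 1 else 0))
                       \<and> (\<forall>i j. i \<notin> T \<or> j \<notin> T \<longrightarrow> N i j = 0))"

text \<open>(M_{T,T})^{-1} v_T, as a function on T (zero outside T).\<close>
definition sub_inv_apply :: "real^'n^'n \<Rightarrow> 'n set \<Rightarrow> real^'n \<Rightarrow> ('n \<Rightarrow> real)" where
  "sub_inv_apply M T v = (\<lambda>i. \<Sum>j\<in>T. sub_inv M T i j * v $ j)"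

definition lasso_obj :: "real^'n^'n \<Rightarrow> real^'n \<Rightarrow> real \<Rightarrow> real^'n \<Rightarrow> real" where
  "lasso_obj \<Sigma> \<theta>0 \<xi> \<theta> = (1/2) * ((\<theta> - \<theta>0) \<bullet> (\<Sigma> *v (\<theta> - \<theta>0))) + \<xi> * (\<Sum>i\<in>UNIV. \<bar>\<theta> $ i\<bar>)"

end

theory Submission
  imports Defs
begin

text \<open>The objective is convex, so \<open>\<theta>\<close> is a minimizer iff the subgradient (KKT) conditions hold:
  \<open>g = \<Sigma>(\<theta> - \<theta>\<^sub>0)\<close> satisfies \<open>\<bar>g\<^sub>i\<bar> \<le> \<xi>\<close>, with \<open>g\<^sub>i = -\<xi> sgn \<theta>\<^sub>i\<close> wherever \<open>\<theta>\<^sub>i \<noteq> 0\<close>.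
  If \<open>sign \<theta> = v\<close>, then \<open>\<theta> - \<theta>\<^sub>0\<close> is supported on \<open>T\<close> and the conditions on \<open>T\<close> say
  \<open>\<Sigma>\<^sub>T\<^sub>,\<^sub>T (\<theta> - \<theta>\<^sub>0)\<^sub>T = -\<xi> v\<^sub>T\<close>; as \<open>\<Sigma>\<^sub>T\<^sub>,\<^sub>T\<close> is positive definite this forces the
  closed form, and the conditions off \<open>T\<close> become the dual bound. Conversely, under the dual bound
  and sign consistency the closed form satisfies the KKT conditions with sign pattern \<open>v\<close>,
  so by uniqueness it is \<open>\<theta>hat\<close>.\<close>

lemma matrix_vector_mult_nth_supported:
  fixes M :: "'a::semiring_1^'n^'m"
  assumes "\<forall>k. k \<notin> T \<longrightarrow> x $ k = 0"
  shows "(M *v x) $ i = (\<Sum>k\<in>T. M $ i $ k * x $ k)"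
  unfolding matrix_vector_mult_def
  by simp (rule sum.mono_neutral_cong_right, use assms in auto)

lemma symmetric_inner_matrix_vector_mult:
  assumes "transpose S = (S::real^'n^'n)"
  shows "x \<bullet> (S *v y) = y \<bullet> (S *v x)"
  by (metis assms dot_lmul_matrix inner_commute transpose_transpose vector_transpose_matrix)

lemma pos_def_mat_supported_kernel:
  assumes "pos_def_mat S" and "\<forall>k. k \<notin> T \<longrightarrow> x $ k = 0" and "\<forall>i\<in>T. (S *v x) $ i = 0"
  shows "x = 0"
proof -
  have "x \<bullet> (S *v x) = (\<Sum>i\<in>UNIV. x $ i * (S *v x) $ i)"
    by (simp add: inner_vec_def)
  also have "\<dots> = 0"
    using assms(2,3) by (intro sum.neutral) (metis mult_eq_0_iff)
  finally show ?thesis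
    using assms(1) unfolding pos_def_mat_def by force
qed

subsection \<open>The restricted inverse\<close>

definition restricted_inverse :: "real^'n^'n \<Rightarrow> 'n set \<Rightarrow> ('n \<Rightarrow> 'n \<Rightarrow> real) \<Rightarrow> bool" where
  "restricted_inverse M T N \<longleftrightarrow>
     (\<forall>i\<in>T. \<forall>j\<in>T. (\<Sum>k\<in>T. M $ i $ k * N k j) = (if i = j then 1 else 0))
     \<and> (\<forall>i j. i \<notin> T \<or> j \<notin> T \<longrightarrow> N i j = 0)"

lemma restricted_inverse_exists:
  fixes S :: "real^'n^'n"
  assumes pd: "pos_def_mat S"
  shows "\<exists>N. restricted_inverse S T N"
proof -
  text \<open>Pad \<open>S\<^sub>T\<^sub>T\<close> with an identity block; its inverse restricted to \<open>T \<times> T\<close> inverts \<open>S\<^sub>T\<^sub>T\<close>.\<close>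
  define A :: "real^'n^'n"
    where "A = (\<chi> i j. if i \<in> T \<and> j \<in> T then S $ i $ j else if i = j then 1 else 0)"
  have A_in: "(\<Sum>k\<in>UNIV. A $ i $ k * y k) = (\<Sum>k\<in>T. S $ i $ k * y k)" if "i \<in> T" for i y
    by (rule sum.mono_neutral_cong_right) (auto simp: A_def that)
  have A_out: "(\<Sum>k\<in>UNIV. A $ i $ k * y k) = y i" if "i \<notin> T" for i y
    by (subst sum.remove[of _ i]) (auto simp: A_def that)
  have "inj ((*v) A)"
  proof (rule linear_injective_0[THEN iffD2, OF matrix_vector_mul_linear], intro allI impI)
    fix x :: "real^'n"
    assume "A *v x = 0"
    then have Ax: "(\<Sum>k\<in>UNIV. A $ i $ k * x $ k) = 0" for i
      by (simp only: vec_eq_iff matrix_vector_mult_def vec_lambda_beta zero_index)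
    have supp: "\<forall>k. k \<notin> T \<longrightarrow> x $ k = 0"
      using A_out[of _ "\<lambda>k. x $ k"] Ax by simp
    have "\<forall>i\<in>T. (S *v x) $ i = 0"
      using A_in[of _ "\<lambda>k. x $ k"] Ax by (simp add: matrix_vector_mult_nth_supported[OF supp])
    then show "x = 0"
      by (rule pos_def_mat_supported_kernel[OF pd supp])
  qed
  then obtain B where "B ** A = mat 1"
    using matrix_left_invertible_injective by blast
  then have AB: "A ** B = mat 1"
    using matrix_left_right_inverse by blast
  have "(\<Sum>k\<in>T. S $ i $ k * (if k \<in> T \<and> j \<in> T then B $ k $ j else 0)) = (if i = j then 1 else 0)"
    if "i \<in> T" "j \<in> T" for i j
  proof -
    have "(\<Sum>k\<in>T. S $ i $ k * (if k \<in> T \<and> j \<in> T then B $ k $ j else 0))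
        = (\<Sum>k\<in>UNIV. A $ i $ k * B $ k $ j)"
      using A_in[OF that(1), of "\<lambda>k. B $ k $ j"] that(2) by simp
    also have "\<dots> = (A ** B) $ i $ j"
      by (simp add: matrix_matrix_mult_def)
    finally show ?thesis
      using AB by (simp add: mat_def)
  qed
  then show ?thesis
    unfolding restricted_inverse_def
    by (intro exI[of _ "\<lambda>i j. if i \<in> T \<and> j \<in> T then B $ i $ j else 0"]) auto
qed

lemma restricted_inverse_unique:
  fixes S :: "real^'n^'n"
  assumes pd: "pos_def_mat S"
    and N1: "restricted_inverse S T N1" and N2: "restricted_inverse S T N2"
  shows "N1 = N2"
proof (intro ext)
  fix k j
  show "N1 k j = N2 k j"
  proof (cases "j \<in> T")
    case True
    define d :: "real^'n" where "d = (\<chi> k. N1 k j - N2 k j)"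
    have supp: "\<forall>k. k \<notin> T \<longrightarrow> d $ k = 0"
      using N1 N2 by (simp add: d_def restricted_inverse_def)
    have "(S *v d) $ i = 0" if "i \<in> T" for i
    proof -
      have "(S *v d) $ i = (\<Sum>k\<in>T. S $ i $ k * N1 k j) - (\<Sum>k\<in>T. S $ i $ k * N2 k j)"
        unfolding matrix_vector_mult_nth_supported[OF supp]
        by (simp add: d_def right_diff_distrib sum_subtractf)
      then show ?thesis
        using N1 N2 True that by (simp add: restricted_inverse_def)
    qed
    then have "d = 0"
      using pos_def_mat_supported_kernel[OF pd supp] by blast
    then show ?thesis
      by (metis d_def eq_iff_diff_eq_0 vec_lambda_beta zero_index)
  qed (use N1 N2 in \<open>simp add: restricted_inverse_def\<close>)
qed

lemma restricted_inverse_sub_inv: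
  assumes "pos_def_mat S"
  shows "restricted_inverse S T (sub_inv S T)"
proof -
  obtain N where N: "restricted_inverse S T N"
    using restricted_inverse_exists[OF assms] ..
  have "\<exists>!N. restricted_inverse S T N"
    by (rule ex1I[of _ N], rule N, rule restricted_inverse_unique[OF assms _ N])
  then have "restricted_inverse S T (THE N. restricted_inverse S T N)"
    by (rule theI')
  then show ?thesis
    unfolding sub_inv_def restricted_inverse_def .
qed

lemma sub_inv_apply_outside:
  assumes "pos_def_mat S" and "k \<notin> T"
  shows "sub_inv_apply S T v k = 0"
  using restricted_inverse_sub_inv[OF assms(1), of T] assms(2)
  by (simp add: sub_inv_apply_def restricted_inverse_def)

lemma sub_inv_apply_solves:
  assumes "pos_def_mat S" and "i \<in> T"
  shows "(\<Sum>k\<in>T. S $ i $ k * sub_inv_apply S T v k) = v $ i"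
proof -
  have "(\<Sum>k\<in>T. S $ i $ k * sub_inv_apply S T v k)
      = (\<Sum>k\<in>T. \<Sum>j\<in>T. S $ i $ k * sub_inv S T k j * v $ j)"
    by (simp add: sub_inv_apply_def sum_distrib_left mult.assoc)
  also have "\<dots> = (\<Sum>j\<in>T. \<Sum>k\<in>T. S $ i $ k * sub_inv S T k j * v $ j)"
    by (rule sum.swap)
  also have "\<dots> = (\<Sum>j\<in>T. (\<Sum>k\<in>T. S $ i $ k * sub_inv S T k j) * v $ j)"
    by (simp add: sum_distrib_right)
  also have "\<dots> = (\<Sum>j\<in>T. if i = j then v $ j else 0)"
    using restricted_inverse_sub_inv[OF assms(1), of T] assms(2)
    by (intro sum.cong) (auto simp: restricted_inverse_def)
  also have "\<dots> = v $ i"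
    using assms(2) by (simp add: sum.delta)
  finally show ?thesis .
qed

subsection \<open>Optimality conditions for the lasso\<close>

lemma nonneg_linear_coeff_at_right:
  fixes a b \<delta> :: real
  assumes "0 < \<delta>" and "\<forall>t. 0 < t \<and> t < \<delta> \<longrightarrow> 0 \<le> a * t + b * t\<^sup>2"
  shows "0 \<le> a"
proof (rule tendsto_lowerbound)
  show "((\<lambda>t. a + b * t) \<longlongrightarrow> a) (at_right 0)"
    by (auto intro!: tendsto_eq_intros)
  have "0 \<le> a + b * t" if "0 < t" "t < \<delta>" for t
  proof -
    have "t * (a + b * t) = a * t + b * t\<^sup>2"
      by (simp add: power2_eq_square algebra_simps)
    then have "0 \<le> t * (a + b * t)"
      using assms(2) that by simp
    then show ?thesis
      using that(1) by (simp add: zero_le_mult_iff)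
  qed
  then show "\<forall>\<^sub>F t in at_right 0. 0 \<le> a + b * t"
    using assms(1) by (auto simp: eventually_at_right_field)
qed simp

lemma abs_penalty_min_subgradient:
  fixes a b c x :: real
  assumes "0 \<le> c" and min: "\<forall>t. 0 \<le> a * t + b * t\<^sup>2 + c * (\<bar>x + t\<bar> - \<bar>x\<bar>)"
  shows "\<bar>a\<bar> \<le> c" and "x \<noteq> 0 \<Longrightarrow> a = - c * sgn x"
proof -
  have "0 \<le> (a + c) * t + b * t\<^sup>2 \<and> 0 \<le> (c - a) * t + b * t\<^sup>2" if "0 < t" for t
  proof -
    have "c * (\<bar>x + t\<bar> - \<bar>x\<bar>) \<le> c * t" "c * (\<bar>x + - t\<bar> - \<bar>x\<bar>) \<le> c * t"
      using assms(1) that by (auto intro!: mult_left_mono)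
    then show ?thesis
      using min[rule_format, of t] min[rule_format, of "-t"] by (simp add: algebra_simps)
  qed
  then have "0 \<le> a + c" "0 \<le> c - a"
    using nonneg_linear_coeff_at_right[of 1 "a + c" b] nonneg_linear_coeff_at_right[of 1 "c - a" b]
    by auto
  then show "\<bar>a\<bar> \<le> c"
    by linarith
  assume "x \<noteq> 0"
  then have near: "\<bar>x + s\<bar> - \<bar>x\<bar> = sgn x * s" if "\<bar>s\<bar> < \<bar>x\<bar>" for s
    using that by (cases "x > 0") (auto simp: abs_real_def)
  have "0 \<le> (a + c * sgn x) * t + b * t\<^sup>2 \<and> 0 \<le> - (a + c * sgn x) * t + b * t\<^sup>2"
    if "0 < t \<and> t < \<bar>x\<bar>" for t
  proof -
    have "c * (\<bar>x + t\<bar> - \<bar>x\<bar>) = c * sgn x * t" "c * (\<bar>x + - t\<bar> - \<bar>x\<bar>) = - (c * sgn x * t)"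
      using near[of t] near[of "-t"] that by auto
    then show ?thesis
      using min[rule_format, of t] min[rule_format, of "-t"] by (simp add: algebra_simps)
  qed
  then have "0 \<le> a + c * sgn x" "0 \<le> - (a + c * sgn x)"
    using \<open>x \<noteq> 0\<close> nonneg_linear_coeff_at_right[of "\<bar>x\<bar>" "a + c * sgn x" b]
      nonneg_linear_coeff_at_right[of "\<bar>x\<bar>" "- (a + c * sgn x)" b]
    by auto
  then show "a = - c * sgn x"
    by linarith
qed

lemma abs_subgradient_ineq:
  fixes g c x d :: real
  assumes "\<bar>g\<bar> \<le> c" and "x \<noteq> 0 \<Longrightarrow> g = - c * sgn x"
  shows "0 \<le> g * d + c * (\<bar>x + d\<bar> - \<bar>x\<bar>)"
proof (cases "x = 0")
  case True
  have "- (g * d) \<le> c * \<bar>d\<bar>"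
    using assms(1) by (metis abs_ge_zero abs_ge_minus_self abs_mult dual_order.trans mult_right_mono)
  then show ?thesis
    using True by simp
next
  case False
  have "sgn x * (x + d) \<le> \<bar>x + d\<bar>"
    by (metis abs_ge_self abs_mult abs_sgn_eq_1 False mult_1)
  then have "c * (sgn x * (x + d)) \<le> c * \<bar>x + d\<bar>"
    using assms(1) by (intro mult_left_mono) auto
  moreover have "x * sgn x = \<bar>x\<bar>"
    by (simp add: sgn_real_def abs_real_def)
  ultimately show ?thesis
    using assms(2)[OF False] by (simp add: algebra_simps)
qed

text \<open>Coordinatewise, \<open>-\<Sigma>(\<theta> - \<theta>\<^sub>0)\<close> is a subgradient of \<open>\<xi>\<parallel>\<theta>\<parallel>\<^sub>1\<close> at \<open>\<theta>\<close>.\<close>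
definition lasso_kkt :: "real^'n^'n \<Rightarrow> real^'n \<Rightarrow> real \<Rightarrow> real^'n \<Rightarrow> bool" where
  "lasso_kkt \<Sigma> \<theta>0 \<xi> \<theta> \<longleftrightarrow>
     (\<forall>i. \<bar>(\<Sigma> *v (\<theta> - \<theta>0)) $ i\<bar> \<le> \<xi> \<and> (\<theta> $ i \<noteq> 0 \<longrightarrow> (\<Sigma> *v (\<theta> - \<theta>0)) $ i = - \<xi> * sgn (\<theta> $ i)))"

lemma symmetric_quadratic_form_add:
  assumes "transpose \<Sigma> = (\<Sigma>::real^'n^'n)"
  shows "(u + d) \<bullet> (\<Sigma> *v (u + d)) = u \<bullet> (\<Sigma> *v u) + 2 * (d \<bullet> (\<Sigma> *v u)) + d \<bullet> (\<Sigma> *v d)"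
  using symmetric_inner_matrix_vector_mult[OF assms, of u d]
  by (simp add: matrix_vector_right_distrib inner_add_left inner_add_right)

lemma lasso_obj_add:
  assumes "transpose \<Sigma> = \<Sigma>"
  shows "lasso_obj \<Sigma> \<theta>0 \<xi> (\<theta> + d) = lasso_obj \<Sigma> \<theta>0 \<xi> \<theta> + d \<bullet> (\<Sigma> *v (\<theta> - \<theta>0))
           + 1/2 * (d \<bullet> (\<Sigma> *v d)) + \<xi> * (\<Sum>i\<in>UNIV. \<bar>\<theta> $ i + d $ i\<bar> - \<bar>\<theta> $ i\<bar>)"
proof -
  have shift: "\<theta> + d - \<theta>0 = (\<theta> - \<theta>0) + d"
    by simp
  show ?thesis
    unfolding lasso_obj_def shift symmetric_quadratic_form_add[OF assms] sum_subtractf vector_add_component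
    by (simp only: right_diff_distrib distrib_left)
qed

lemma lasso_kkt_imp_minimizer:
  assumes sym: "transpose \<Sigma> = \<Sigma>" and psd: "\<forall>x. 0 \<le> x \<bullet> (\<Sigma> *v x)"
    and kkt: "lasso_kkt \<Sigma> \<theta>0 \<xi> \<theta>"
  shows "lasso_obj \<Sigma> \<theta>0 \<xi> \<theta> \<le> lasso_obj \<Sigma> \<theta>0 \<xi> \<theta>'"
proof -
  define g where "g = \<Sigma> *v (\<theta> - \<theta>0)"
  define d where "d = \<theta>' - \<theta>"
  have "d \<bullet> g + \<xi> * (\<Sum>i\<in>UNIV. \<bar>\<theta> $ i + d $ i\<bar> - \<bar>\<theta> $ i\<bar>)
      = (\<Sum>i\<in>UNIV. g $ i * d $ i + \<xi> * (\<bar>\<theta> $ i + d $ i\<bar> - \<bar>\<theta> $ i\<bar>))"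
    by (simp add: inner_vec_def sum.distrib sum_distrib_left mult.commute)
  also have "\<dots> \<ge> 0"
    using kkt unfolding lasso_kkt_def g_def[symmetric]
    by (intro sum_nonneg abs_subgradient_ineq) auto
  finally have "0 \<le> d \<bullet> g + \<xi> * (\<Sum>i\<in>UNIV. \<bar>\<theta> $ i + d $ i\<bar> - \<bar>\<theta> $ i\<bar>)" .
  moreover have "\<theta> + d = \<theta>'"
    by (simp add: d_def)
  then have "lasso_obj \<Sigma> \<theta>0 \<xi> \<theta>' = lasso_obj \<Sigma> \<theta>0 \<xi> \<theta> + d \<bullet> g
      + 1/2 * (d \<bullet> (\<Sigma> *v d)) + \<xi> * (\<Sum>i\<in>UNIV. \<bar>\<theta> $ i + d $ i\<bar> - \<bar>\<theta> $ i\<bar>)"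
    using lasso_obj_add[OF sym, of \<theta>0 \<xi> \<theta> d, folded g_def] by simp
  ultimately show ?thesis
    using psd[rule_format, of d] by linarith
qed

lemma minimizer_imp_lasso_kkt:
  assumes sym: "transpose \<Sigma> = \<Sigma>" and "0 \<le> \<xi>"
    and min: "\<forall>\<theta>'. lasso_obj \<Sigma> \<theta>0 \<xi> \<theta> \<le> lasso_obj \<Sigma> \<theta>0 \<xi> \<theta>'"
  shows "lasso_kkt \<Sigma> \<theta>0 \<xi> \<theta>"
  unfolding lasso_kkt_def
proof
  fix i
  define g where "g = \<Sigma> *v (\<theta> - \<theta>0)"
  have "0 \<le> g $ i * t + \<Sigma> $ i $ i / 2 * t\<^sup>2 + \<xi> * (\<bar>\<theta> $ i + t\<bar> - \<bar>\<theta> $ i\<bar>)" for t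
  proof -
    have l1: "(\<Sum>j\<in>UNIV. \<bar>\<theta> $ j + axis i t $ j\<bar> - \<bar>\<theta> $ j\<bar>) = \<bar>\<theta> $ i + t\<bar> - \<bar>\<theta> $ i\<bar>"
      by (subst sum.remove[of _ i]) (auto simp: axis_def)
    have "(\<Sigma> *v axis i t) $ i = \<Sigma> $ i $ i * t"
      by (simp add: matrix_vector_mult_def axis_def if_distrib cong: if_cong)
    then have quad: "1/2 * (axis i t \<bullet> (\<Sigma> *v axis i t)) = \<Sigma> $ i $ i / 2 * t\<^sup>2"
      by (simp add: inner_axis' power2_eq_square)
    have lin: "axis i t \<bullet> g = g $ i * t"
      by (simp add: inner_axis')
    show ?thesis
      using min[rule_format, of "\<theta> + axis i t"]
        lasso_obj_add[OF sym, of \<theta>0 \<xi> \<theta> "axis i t", folded g_def, unfolded l1 quad lin]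
      by linarith
  qed
  then have "\<forall>t. 0 \<le> g $ i * t + \<Sigma> $ i $ i / 2 * t\<^sup>2 + \<xi> * (\<bar>\<theta> $ i + t\<bar> - \<bar>\<theta> $ i\<bar>)" ..
  from abs_penalty_min_subgradient[OF \<open>0 \<le> \<xi>\<close> this]
  show "\<bar>g $ i\<bar> \<le> \<xi> \<and> (\<theta> $ i \<noteq> 0 \<longrightarrow> g $ i = - \<xi> * sgn (\<theta> $ i))"
    by blast
qed

lemma unique_minimizer_iff_lasso_kkt:
  assumes pd: "pos_def_mat \<Sigma>" and "0 \<le> \<xi>"
    and min: "\<forall>\<theta>. lasso_obj \<Sigma> \<theta>0 \<xi> \<theta>hat \<le> lasso_obj \<Sigma> \<theta>0 \<xi> \<theta>"
    and uniq: "\<forall>\<theta>. lasso_obj \<Sigma> \<theta>0 \<xi> \<theta> \<le> lasso_obj \<Sigma> \<theta>0 \<xi> \<theta>hat \<longrightarrow> \<theta> = \<theta>hat"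
  shows "lasso_kkt \<Sigma> \<theta>0 \<xi> \<theta> \<longleftrightarrow> \<theta> = \<theta>hat"
proof -
  have sym: "transpose \<Sigma> = \<Sigma>"
    using pd by (simp add: pos_def_mat_def)
  have psd: "\<forall>x. 0 \<le> x \<bullet> (\<Sigma> *v x)"
    using pd unfolding pos_def_mat_def by (metis inner_zero_left less_imp_le order_refl)
  show ?thesis
    using uniq lasso_kkt_imp_minimizer[OF sym psd] minimizer_imp_lasso_kkt[OF sym \<open>0 \<le> \<xi>\<close> min]
    by blast
qed

subsection \<open>Solutions with a prescribed sign pattern\<close>

lemma matrix_vector_mult_sub_inv_apply:
  assumes "pos_def_mat S"
  shows "(S *v (\<chi> k. sub_inv_apply S T v k)) $ i = (\<Sum>k\<in>T. S $ i $ k * sub_inv_apply S T v k)"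
  using matrix_vector_mult_nth_supported[of T "\<chi> k. sub_inv_apply S T v k" S i]
  by (simp add: sub_inv_apply_outside[OF assms])

lemma lasso_kkt_sign_imp_closed_form:
  fixes \<Sigma> :: "real^'n^'n" and \<theta>0 \<theta> v :: "real^'n"
  assumes pd: "pos_def_mat \<Sigma>" and "0 < \<xi>"
    and \<theta>0: "supp_vec \<theta>0 \<subseteq> T" and v: "supp_vec v = T"
    and kkt: "lasso_kkt \<Sigma> \<theta>0 \<xi> \<theta>" and sign: "sign_vec \<theta> = v"
  shows "\<theta> = \<theta>0 - \<xi> *\<^sub>R (\<chi> k. sub_inv_apply \<Sigma> T v k)"
    and "\<forall>i\<in>-T. \<bar>\<Sum>j\<in>T. \<Sigma> $ i $ j * sub_inv_apply \<Sigma> T v j\<bar> \<le> 1"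
proof -
  define W where "W = (\<chi> k. sub_inv_apply \<Sigma> T v k)"
  define g where "g = \<Sigma> *v (\<theta> - \<theta>0)"
  define x where "x = (\<theta> - \<theta>0) + \<xi> *\<^sub>R W"
  have sgn: "sgn (\<theta> $ i) = v $ i" for i
    using sign by (simp add: sign_vec_def vec_eq_iff)
  have g_in: "g $ i = - \<xi> * v $ i" if "i \<in> T" for i
  proof -
    have "\<theta> $ i \<noteq> 0"
      using sgn[of i] v that by (auto simp: supp_vec_def)
    then have "g $ i = - \<xi> * sgn (\<theta> $ i)"
      using kkt unfolding lasso_kkt_def g_def by blast
    then show ?thesis
      by (simp only: sgn)
  qed
  have "(\<Sigma> *v x) $ i = 0" if "i \<in> T" for i
  proof -
    have "(\<Sigma> *v x) $ i = g $ i + \<xi> * (\<Sum>k\<in>T. \<Sigma> $ i $ k * sub_inv_apply \<Sigma> T v k)"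
      unfolding x_def W_def g_def matrix_vector_right_distrib matrix_vector_mult_scaleR
      by (simp add: matrix_vector_mult_sub_inv_apply[OF pd])
    then show ?thesis
      using g_in[OF that] sub_inv_apply_solves[OF pd that] by simp
  qed
  moreover have "\<forall>k. k \<notin> T \<longrightarrow> x $ k = 0"
  proof (intro allI impI)
    fix k assume "k \<notin> T"
    then have "\<theta> $ k = 0" "\<theta>0 $ k = 0"
      using sgn[of k] v \<theta>0 by (auto simp: supp_vec_def sgn_eq_0_iff)
    then show "x $ k = 0"
      by (simp add: x_def W_def sub_inv_apply_outside[OF pd \<open>k \<notin> T\<close>])
  qed
  ultimately have "x = 0"
    using pos_def_mat_supported_kernel[OF pd] by blast
  then show \<theta>: "\<theta> = \<theta>0 - \<xi> *\<^sub>R W"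
    unfolding x_def by (metis add_diff_cancel_left' diff_add_cancel diff_diff_eq2 diff_zero)
  show "\<forall>i\<in>-T. \<bar>\<Sum>j\<in>T. \<Sigma> $ i $ j * sub_inv_apply \<Sigma> T v j\<bar> \<le> 1"
  proof
    fix i
    have diff: "\<theta> - \<theta>0 = (- \<xi>) *\<^sub>R W"
      by (simp add: \<theta>)
    have "g $ i = - \<xi> * (\<Sum>j\<in>T. \<Sigma> $ i $ j * sub_inv_apply \<Sigma> T v j)"
      unfolding g_def diff W_def matrix_vector_mult_scaleR vector_scaleR_component
        matrix_vector_mult_sub_inv_apply[OF pd]
      by simp
    moreover have "\<bar>g $ i\<bar> \<le> \<xi>"
      using kkt unfolding lasso_kkt_def g_def by blast
    ultimately have "\<xi> * \<bar>\<Sum>j\<in>T. \<Sigma> $ i $ j * sub_inv_apply \<Sigma> T v j\<bar> \<le> \<xi> * 1"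
      using \<open>0 < \<xi>\<close> by (simp add: abs_mult)
    then show "\<bar>\<Sum>j\<in>T. \<Sigma> $ i $ j * sub_inv_apply \<Sigma> T v j\<bar> \<le> 1"
      using \<open>0 < \<xi>\<close> by (simp only: mult_le_cancel_left_pos)
  qed
qed

lemma closed_form_lasso_kkt_sign:
  fixes \<Sigma> :: "real^'n^'n" and \<theta>0 v :: "real^'n"
  assumes pd: "pos_def_mat \<Sigma>" and "0 \<le> \<xi>"
    and \<theta>0: "supp_vec \<theta>0 \<subseteq> T" and v01: "\<forall>i. v $ i \<in> {-1, 0, 1}" and v: "supp_vec v = T"
    and dual: "\<forall>i\<in>-T. \<bar>\<Sum>j\<in>T. \<Sigma> $ i $ j * sub_inv_apply \<Sigma> T v j\<bar> \<le> 1"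
    and signs: "\<forall>i\<in>T. v $ i = sgn (\<theta>0 $ i - \<xi> * sub_inv_apply \<Sigma> T v i)"
  defines "\<theta> \<equiv> \<theta>0 - \<xi> *\<^sub>R (\<chi> k. sub_inv_apply \<Sigma> T v k)"
  shows "lasso_kkt \<Sigma> \<theta>0 \<xi> \<theta>" and "sign_vec \<theta> = v"
proof -
  have \<theta>_nth: "\<theta> $ i = \<theta>0 $ i - \<xi> * sub_inv_apply \<Sigma> T v i" for i
    by (simp add: \<theta>_def)
  have \<theta>_out: "\<theta> $ i = 0" if "i \<notin> T" for i
    using \<theta>0 that sub_inv_apply_outside[OF pd that] by (auto simp: \<theta>_nth supp_vec_def)
  have v_out: "v $ i = 0" if "i \<notin> T" for i
    using v that by (auto simp: supp_vec_def)
  have sgn: "sgn (\<theta> $ i) = v $ i" for i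
    using signs \<theta>_out v_out by (cases "i \<in> T") (auto simp: \<theta>_nth)
  then show "sign_vec \<theta> = v"
    by (simp add: sign_vec_def vec_eq_iff)
  have diff: "\<theta> - \<theta>0 = (- \<xi>) *\<^sub>R (\<chi> k. sub_inv_apply \<Sigma> T v k)"
    by (simp add: \<theta>_def)
  have grad: "(\<Sigma> *v (\<theta> - \<theta>0)) $ i = - \<xi> * (\<Sum>k\<in>T. \<Sigma> $ i $ k * sub_inv_apply \<Sigma> T v k)" for i
    unfolding diff matrix_vector_mult_scaleR vector_scaleR_component matrix_vector_mult_sub_inv_apply[OF pd]
    by simp
  show "lasso_kkt \<Sigma> \<theta>0 \<xi> \<theta>"
    unfolding lasso_kkt_def
  proof
    fix i
    show "\<bar>(\<Sigma> *v (\<theta> - \<theta>0)) $ i\<bar> \<le> \<xi> \<and> (\<theta> $ i \<noteq> 0 \<longrightarrow> (\<Sigma> *v (\<theta> - \<theta>0)) $ i = - \<xi> * sgn (\<theta> $ i))"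
    proof (cases "i \<in> T")
      case True
      have "\<bar>v $ i\<bar> \<le> 1"
        using v01[rule_format, of i] by auto
      then show ?thesis
        using True \<open>0 \<le> \<xi>\<close> by (simp add: grad sub_inv_apply_solves[OF pd] sgn abs_mult mult_left_le)
    next
      case False
      then show ?thesis
        using dual \<open>0 \<le> \<xi>\<close> by (simp add: grad \<theta>_out abs_mult mult_left_le)
    qed
  qed
qed

theorem lemma3p3:
  fixes \<Sigma> :: "real^'n^'n" and \<theta>0 \<theta>hat v :: "real^'n" and \<xi> :: real and T :: "'n set"
  assumes "pos_def_mat \<Sigma>"
    and "\<xi> > 0"
    and "\<forall>\<theta>. lasso_obj \<Sigma> \<theta>0 \<xi> \<theta>hat \<le> lasso_obj \<Sigma> \<theta>0 \<xi> \<theta>"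
    and "\<forall>\<theta>. lasso_obj \<Sigma> \<theta>0 \<xi> \<theta> \<le> lasso_obj \<Sigma> \<theta>0 \<xi> \<theta>hat \<longrightarrow> \<theta> = \<theta>hat"
    and "supp_vec \<theta>0 \<subseteq> T"
    and "\<forall>i. v $ i \<in> {-1, 0, 1}"
    and "supp_vec v = T"
  shows "(sign_vec \<theta>hat = v \<longleftrightarrow>
            (\<forall>i\<in>-T. \<bar>\<Sum>j\<in>T. \<Sigma> $ i $ j * sub_inv_apply \<Sigma> T v j\<bar> \<le> 1) \<and>
            (\<forall>i\<in>T. v $ i = sgn (\<theta>0 $ i - \<xi> * sub_inv_apply \<Sigma> T v i)))
       \<and> ((\<forall>i\<in>-T. \<bar>\<Sum>j\<in>T. \<Sigma> $ i $ j * sub_inv_apply \<Sigma> T v j\<bar> \<le> 1) \<and>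
            (\<forall>i\<in>T. v $ i = sgn (\<theta>0 $ i - \<xi> * sub_inv_apply \<Sigma> T v i))
          \<longrightarrow> (\<forall>i\<in>-T. \<theta>hat $ i = 0) \<and>
              (\<forall>i\<in>T. \<theta>hat $ i = \<theta>0 $ i - \<xi> * sub_inv_apply \<Sigma> T v i))"
proof -
  define \<theta>s where "\<theta>s = \<theta>0 - \<xi> *\<^sub>R (\<chi> k. sub_inv_apply \<Sigma> T v k)"
  note kkt_iff = unique_minimizer_iff_lasso_kkt[OF assms(1) less_imp_le[OF assms(2)] assms(3,4)]
  have kkt_hat: "lasso_kkt \<Sigma> \<theta>0 \<xi> \<theta>hat"
    using kkt_iff by blast
  have \<theta>s_nth: "\<theta>s $ i = \<theta>0 $ i - \<xi> * sub_inv_apply \<Sigma> T v i" for i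
    by (simp add: \<theta>s_def)
  have \<theta>s_out: "\<theta>s $ i = 0" if "i \<notin> T" for i
    using assms(5) that sub_inv_apply_outside[OF assms(1) that] by (auto simp: \<theta>s_nth supp_vec_def)
  have sufficient: "\<theta>hat = \<theta>s \<and> sign_vec \<theta>hat = v"
    if "\<forall>i\<in>-T. \<bar>\<Sum>j\<in>T. \<Sigma> $ i $ j * sub_inv_apply \<Sigma> T v j\<bar> \<le> 1" (is ?dual)
      and "\<forall>i\<in>T. v $ i = sgn (\<theta>0 $ i - \<xi> * sub_inv_apply \<Sigma> T v i)" (is ?signs)
    using closed_form_lasso_kkt_sign[OF assms(1) less_imp_le[OF assms(2)] assms(5-7) that, folded \<theta>s_def]
      kkt_iff by auto
  have necessary: "?dual \<and> ?signs" if sign: "sign_vec \<theta>hat = v"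
  proof -
    note closed_form = lasso_kkt_sign_imp_closed_form[OF assms(1,2,5,7) kkt_hat sign, folded \<theta>s_def]
    have "v $ i = sgn (\<theta>s $ i)" for i
      using sign closed_form(1) by (simp add: sign_vec_def vec_eq_iff)
    then show ?thesis
      using closed_form(2) by (simp add: \<theta>s_nth)
  qed
  show ?thesis
  proof (rule conjI)
    show "sign_vec \<theta>hat = v \<longleftrightarrow> ?dual \<and> ?signs"
      using sufficient necessary by blast
    show "?dual \<and> ?signs \<longrightarrow> (\<forall>i\<in>-T. \<theta>hat $ i = 0) \<and>
        (\<forall>i\<in>T. \<theta>hat $ i = \<theta>0 $ i - \<xi> * sub_inv_apply \<Sigma> T v i)"
      using sufficient \<theta>s_nth \<theta>s_out by auto
  qed
qed

end
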